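(* Let $m,n$ be positive integers. For any $(A,\boldsymbol{\gamma})\in[0,1)^{m\times n}\times[0,1)^m$, we have $(A,\boldsymbol{\gamma})\in\Omega(m,n)$ if and only if $S_l(A,\boldsymbol{\gamma})<+\infty$ for all $l\in\mathbb{N}$.
   Context: $[0,1)^{m\times n}$ is the set of real $m\times n$ matrices with entries in $[0,1)$. For $\boldsymbol{x}\in\mathbb{R}^n$, $\|\boldsymbol{x}\|=\max_i|x_i|$; for $\boldsymbol{y}\in\mathbb{R}^m$, $\langle\boldsymbol{y}\rangle=\min_{\boldsymbol{p}\in\mathbb{Z}^m}\|\boldsymbol{y}-\boldsymbol{p}\|$. For $\psi:\mathbb{N}\to[0,\infty)$, $W_{m,n}(\psi)$ is the set of pairs $(A,\boldsymbol{\gamma})$ such that $\langle A\boldsymbol{q}-\boldsymbol{\gamma}\rangle<\psi(\|\boldsymbol{q}\|)$ for infinitely many $\boldsymbol{q}\in\mathbb{Z}^n$. "Decreasing" means non-increasing. $\mathcal{D}$ is the set of decreasing $\psi:\mathbb{N}\to[0,\infty)$ with $\sum_{q\ge1}q^{n-1}\psi(q)^m=\infty$; $\Omega(m,n)=\bigcap_{\psi\in\mathcal{D}}W_{m,n}(\psi)$. For $l\in\mathbb{N}$, $S_l(A,\boldsymbol{\gamma})=\sum_{t=l}^\infty t^{n-1}\min_{\boldsymbol{q}\in\mathbb{Z}^n,\ l\le\|\boldsymbol{q}\|\le t}\langle A\boldsymbol{q}-\boldsymbol{\gamma}\rangle^m$. *)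

theory Defs
  imports "HOL-Analysis.Analysis"
begin

definition vnorm :: "'a::{linordered_idom} ^ 'k \<Rightarrow> 'a" where
  "vnorm x = Max (range (\<lambda>i. \<bar>x $ i\<bar>))"

definition ivec :: "int ^ 'k \<Rightarrow> real ^ 'k" where
  "ivec q = (\<chi> i. real_of_int (q $ i))"

definition distZ :: "real ^ 'm \<Rightarrow> real" where
  "distZ y = Inf ((\<lambda>p. vnorm (y - ivec p)) ` UNIV)"

definition W :: "(nat \<Rightarrow> real) \<Rightarrow> ((real ^ 'n ^ 'm) \<times> (real ^ 'm)) set" where
  "W \<psi> = {(A, \<gamma>). infinite {q :: int ^ 'n.
      distZ (A *v ivec q - \<gamma>) < \<psi> (nat (vnorm q))}}"

definition Dcls :: "nat \<Rightarrow> nat \<Rightarrow> (nat \<Rightarrow> real) set" where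
  "Dcls m n = {\<psi>. (\<forall>q. 0 \<le> \<psi> q) \<and> (\<forall>a b. 1 \<le> a \<longrightarrow> a \<le> b \<longrightarrow> \<psi> b \<le> \<psi> a) \<and>
      \<not> summable (\<lambda>k. real (Suc k) ^ (n - 1) * \<psi> (Suc k) ^ m)}"

definition Omega :: "((real ^ 'n ^ 'm) \<times> (real ^ 'm)) set" where
  "Omega = (\<Inter>\<psi> \<in> Dcls CARD('m) CARD('n). W \<psi>)"

definition Sterm :: "real ^ 'n ^ 'm \<Rightarrow> real ^ 'm \<Rightarrow> nat \<Rightarrow> nat \<Rightarrow> real" where
  "Sterm A \<gamma> l t = real t ^ (CARD('n) - 1) *
     Min ((\<lambda>q. distZ (A *v ivec q - \<gamma>) ^ CARD('m)) `
          {q :: int ^ 'n. int l \<le> vnorm q \<and> vnorm q \<le> int t})"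

text \<open>S_l(A,gamma) < +infinity: the nonnegative series sum_{t>=l} Sterm converges.\<close>
definition S_finite :: "real ^ 'n ^ 'm \<Rightarrow> real ^ 'm \<Rightarrow> nat \<Rightarrow> bool" where
  "S_finite A \<gamma> l = summable (\<lambda>k. Sterm A \<gamma> l (l + k))"

end

theory Submission
  imports Defs
begin

(* The smallest distance to the nearest integer point over the shell l \<le> |q| \<le> t,
   viewed as a function of t, is non-increasing, and S_l is exactly the series that
   defines the class D for it.  Hence if (A, \<gamma>) lies in \<Omega> but S_l diverged, this
   function would belong to D, and W would contain infinitely many q beyond the shell
   start l, which is impossible since it is the minimum over those q.  Conversely, if
   some \<psi> in D misses (A, \<gamma>), then only finitely many q beat \<psi>; past their norms
   \<psi>(t) is dominated by the shell minimum, so the divergent D-series of \<psi> forces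
   some S_l to diverge. *)

lemma abs_le_vnorm: "\<bar>x $ i\<bar> \<le> vnorm (x :: 'a::linordered_idom ^ 'k)"
  unfolding vnorm_def by (rule Max_ge) auto

lemma vnorm_const: "vnorm ((\<chi> i. c) :: 'a::linordered_idom ^ 'k) = \<bar>c\<bar>"
proof -
  have "range (\<lambda>i. \<bar>((\<chi> i. c) :: 'a ^ 'k) $ i\<bar>) = {\<bar>c\<bar>}" by auto
  then show ?thesis unfolding vnorm_def by simp
qed

lemma finite_vnorm_le: "finite {q :: int ^ 'k. vnorm q \<le> c}"
proof -
  have "finite (vec_nth -` PiE UNIV (\<lambda>_::'k. {-c..c}))"
    by (rule finite_vimageI) (auto intro: finite_PiE simp: inj_def vec_eq_iff)
  moreover have "{q :: int ^ 'k. vnorm q \<le> c} \<subseteq> vec_nth -` PiE UNIV (\<lambda>_::'k. {-c..c})"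
  proof
    fix q :: "int ^ 'k" assume "q \<in> {q. vnorm q \<le> c}"
    then have "-c \<le> q $ i \<and> q $ i \<le> c" for i
      using abs_le_vnorm[of q i] by auto
    then show "q \<in> vec_nth -` PiE UNIV (\<lambda>_::'k. {-c..c})" by auto
  qed
  ultimately show ?thesis by (rule finite_subset[rotated])
qed

lemma finite_imp_vnorm_less:
  assumes "finite (S :: (int ^ 'k) set)"
  obtains l :: nat where "1 \<le> l" "\<And>q. q \<in> S \<Longrightarrow> vnorm q < int l"
proof
  let ?l = "Suc (Max (insert 0 ((\<lambda>q. nat (vnorm q)) ` S)))"
  show "1 \<le> ?l" by simp
  fix q assume "q \<in> S"
  then have "nat (vnorm q) \<le> Max (insert 0 ((\<lambda>q. nat (vnorm q)) ` S))"
    using assms by (intro Max_ge) auto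
  then show "vnorm q < int ?l" by linarith
qed

lemma distZ_nonneg: "0 \<le> distZ y"
  unfolding distZ_def
proof (rule cInf_greatest)
  fix x assume "x \<in> range (\<lambda>p. vnorm (y - ivec p))"
  then obtain p where "x = vnorm (y - ivec p)" by auto
  then show "0 \<le> x" using abs_le_vnorm[of "y - ivec p" undefined] by linarith
qed simp

lemma Min_power_image:
  fixes f :: "'a \<Rightarrow> 'b::linordered_semidom"
  assumes "finite S" "S \<noteq> {}" "\<And>q. q \<in> S \<Longrightarrow> 0 \<le> f q"
  shows "Min ((\<lambda>q. f q ^ k) ` S) = Min (f ` S) ^ k"
proof -
  have "Min (f ` S) \<in> f ` S" using assms by simp
  then obtain q0 where q0: "q0 \<in> S" "f q0 = Min (f ` S)" by auto
  show ?thesis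
  proof (rule Min_eqI)
    show "finite ((\<lambda>q. f q ^ k) ` S)" using assms by simp
    show "Min (f ` S) ^ k \<in> (\<lambda>q. f q ^ k) ` S" using q0 by force
    fix y assume "y \<in> (\<lambda>q. f q ^ k) ` S"
    then obtain q where "q \<in> S" "y = f q ^ k" by auto
    moreover have "Min (f ` S) \<le> f q" using assms \<open>q \<in> S\<close> by simp
    ultimately show "Min (f ` S) ^ k \<le> y" using q0 assms(3) by (metis power_mono)
  qed
qed

definition shell :: "nat \<Rightarrow> nat \<Rightarrow> (int ^ 'k) set" where
  "shell l t = {q. int l \<le> vnorm q \<and> vnorm q \<le> int t}"

lemma finite_shell: "finite (shell l t)"
  unfolding shell_def by (rule finite_subset[OF _ finite_vnorm_le[of "int t"]]) auto

lemma shell_nonempty: "l \<le> t \<Longrightarrow> (shell l t :: (int ^ 'k) set) \<noteq> {}"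
  unfolding shell_def using vnorm_const[of "int l", where 'k='k]
  by (metis (mono_tags, lifting) abs_of_nat empty_iff mem_Collect_eq of_nat_mono order_refl)

lemma shell_mono: "t \<le> t' \<Longrightarrow> shell l t \<subseteq> shell l t'"
  unfolding shell_def by auto

definition min_dist :: "real ^ 'n ^ 'm \<Rightarrow> real ^ 'm \<Rightarrow> nat \<Rightarrow> nat \<Rightarrow> real" where
  "min_dist A \<gamma> l t = Min ((\<lambda>q. distZ (A *v ivec q - \<gamma>)) ` shell l t)"

lemma min_dist_le: "q \<in> shell l t \<Longrightarrow> min_dist A \<gamma> l t \<le> distZ (A *v ivec q - \<gamma>)"
  unfolding min_dist_def by (intro Min_le) (auto simp: finite_shell)

lemma min_dist_nonneg: "l \<le> t \<Longrightarrow> 0 \<le> min_dist A \<gamma> l t"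
  unfolding min_dist_def by (simp add: finite_shell shell_nonempty distZ_nonneg)

lemma min_dist_antimono: "l \<le> t \<Longrightarrow> t \<le> t' \<Longrightarrow> min_dist A \<gamma> l t' \<le> min_dist A \<gamma> l t"
  unfolding min_dist_def
  by (intro Min_antimono image_mono shell_mono finite_imageI finite_shell)
     (auto dest: shell_nonempty)

lemma Sterm_eq_min_dist:
  fixes A :: "real ^ 'n ^ 'm"
  assumes "l \<le> t"
  shows "Sterm A \<gamma> l t = real t ^ (CARD('n) - 1) * min_dist A \<gamma> l t ^ CARD('m)"
proof -
  have "Min ((\<lambda>q. distZ (A *v ivec q - \<gamma>) ^ CARD('m)) ` shell l t)
      = min_dist A \<gamma> l t ^ CARD('m)"
    unfolding min_dist_def
    by (rule Min_power_image[OF finite_shell shell_nonempty[OF assms] distZ_nonneg])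
  then show ?thesis unfolding Sterm_def shell_def by simp
qed

lemma summable_shift_Suc_iff:
  fixes f :: "nat \<Rightarrow> 'a::real_normed_vector"
  shows "summable (\<lambda>k. f (l + k)) \<longleftrightarrow> summable (\<lambda>k. f (Suc k))"
  using summable_iff_shift[of f l] summable_iff_shift[of f 1] by (simp add: add.commute)

lemma S_finite_if_Omega:
  fixes A :: "real ^ 'n ^ 'm"
  assumes "(A, \<gamma>) \<in> Omega"
  shows "S_finite A \<gamma> l"
proof (rule ccontr)
  assume diverges: "\<not> S_finite A \<gamma> l"
  \<comment> \<open>Clamping at l avoids the minimum over an empty shell when t < l.\<close>
  define \<psi> where "\<psi> t = min_dist A \<gamma> l (max t l)" for t
  have "Sterm A \<gamma> l (l + k) = real (l + k) ^ (CARD('n) - 1) * \<psi> (l + k) ^ CARD('m)" for k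
    unfolding \<psi>_def using Sterm_eq_min_dist[of l "l + k" A] by simp
  then have "\<not> summable (\<lambda>k. real (Suc k) ^ (CARD('n) - 1) * \<psi> (Suc k) ^ CARD('m))"
    using diverges summable_shift_Suc_iff[of "\<lambda>t. real t ^ (CARD('n) - 1) * \<psi> t ^ CARD('m)" l]
    unfolding S_finite_def by simp
  moreover have "0 \<le> \<psi> t" for t
    unfolding \<psi>_def by (simp add: min_dist_nonneg)
  moreover have "\<psi> b \<le> \<psi> a" if "a \<le> b" for a b
    unfolding \<psi>_def using that by (intro min_dist_antimono) auto
  ultimately have "\<psi> \<in> Dcls CARD('m) CARD('n)"
    unfolding Dcls_def by blast
  then have "infinite {q :: int ^ 'n. distZ (A *v ivec q - \<gamma>) < \<psi> (nat (vnorm q))}"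
    using assms unfolding Omega_def W_def by auto
  moreover have "{q :: int ^ 'n. distZ (A *v ivec q - \<gamma>) < \<psi> (nat (vnorm q))}
      \<subseteq> {q. vnorm q \<le> int l}"
  proof (rule subsetI, erule contrapos_pp)
    fix q :: "int ^ 'n" assume "q \<notin> {q. vnorm q \<le> int l}"
    then have "q \<in> shell l (max (nat (vnorm q)) l)"
      unfolding shell_def by auto
    then have "\<psi> (nat (vnorm q)) \<le> distZ (A *v ivec q - \<gamma>)"
      unfolding \<psi>_def by (rule min_dist_le)
    then show "q \<notin> {q. distZ (A *v ivec q - \<gamma>) < \<psi> (nat (vnorm q))}" by simp
  qed
  ultimately show False
    using finite_vnorm_le finite_subset by blast
qed

lemma W_if_S_finite:
  fixes A :: "real ^ 'n ^ 'm"
  assumes S_fin: "\<forall>l \<ge> 1. S_finite A \<gamma> l" and \<psi>: "\<psi> \<in> Dcls CARD('m) CARD('n)"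
  shows "(A, \<gamma>) \<in> W \<psi>"
proof (rule ccontr)
  assume "(A, \<gamma>) \<notin> W \<psi>"
  then have "finite {q :: int ^ 'n. distZ (A *v ivec q - \<gamma>) < \<psi> (nat (vnorm q))}"
    unfolding W_def by simp
  then obtain l :: nat where "1 \<le> l"
    and exceptions_small:
      "\<And>q :: int ^ 'n. distZ (A *v ivec q - \<gamma>) < \<psi> (nat (vnorm q)) \<Longrightarrow> vnorm q < int l"
    by (rule finite_imp_vnorm_less) blast
  have beyond: "\<psi> (nat (vnorm q)) \<le> distZ (A *v ivec q - \<gamma>)"
    if "int l \<le> vnorm q" for q :: "int ^ 'n"
    using exceptions_small[of q] that by fastforce
  have \<psi>_le_min_dist: "\<psi> t \<le> min_dist A \<gamma> l t" if "l \<le> t" for t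
    unfolding min_dist_def
  proof (subst Min_ge_iff, safe)
    fix q :: "int ^ 'n" assume q: "q \<in> shell l t"
    then have "\<psi> t \<le> \<psi> (nat (vnorm q))"
      using \<psi> \<open>1 \<le> l\<close> unfolding Dcls_def shell_def by auto
    also have "\<dots> \<le> distZ (A *v ivec q - \<gamma>)"
      using q beyond unfolding shell_def by blast
    finally show "\<psi> t \<le> distZ (A *v ivec q - \<gamma>)" .
  qed (use that in \<open>auto simp: finite_shell shell_nonempty\<close>)
  define g where "g t = real t ^ (CARD('n) - 1) * \<psi> t ^ CARD('m)" for t
  have \<psi>_nonneg: "0 \<le> \<psi> t" for t
    using \<psi> unfolding Dcls_def by auto
  have "norm (g (l + k)) \<le> Sterm A \<gamma> l (l + k)" for k
    unfolding g_def Sterm_eq_min_dist[OF le_add1]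
    using \<psi>_nonneg \<psi>_le_min_dist[OF le_add1] by (auto intro!: mult_left_mono power_mono)
  moreover have "summable (\<lambda>k. Sterm A \<gamma> l (l + k))"
    using S_fin \<open>1 \<le> l\<close> unfolding S_finite_def by simp
  ultimately have "summable (\<lambda>k. g (l + k))"
    by (intro summable_comparison_test[of "\<lambda>k. g (l + k)"]) auto
  then show False
    using \<psi> summable_shift_Suc_iff[of g l] unfolding Dcls_def g_def by simp
qed

theorem lemma2p1:
  fixes A :: "real ^ 'n ^ 'm" and \<gamma> :: "real ^ 'm"
  assumes "\<forall>i j. 0 \<le> A $ i $ j \<and> A $ i $ j < 1"
    and "\<forall>i. 0 \<le> \<gamma> $ i \<and> \<gamma> $ i < 1"
  shows "(A, \<gamma>) \<in> Omega \<longleftrightarrow> (\<forall>l \<ge> 1. S_finite A \<gamma> l)"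
proof
  show "\<forall>l \<ge> 1. S_finite A \<gamma> l" if "(A, \<gamma>) \<in> Omega"
    using S_finite_if_Omega[OF that] by blast
  show "(A, \<gamma>) \<in> Omega" if "\<forall>l \<ge> 1. S_finite A \<gamma> l"
    unfolding Omega_def using W_if_S_finite[OF that] by blast
qed

end
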